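(* For every positive integer $t$ and every graph $G$ with $\alpha(G)\leq 2$ which does not have $K_t$ as an odd minor, we have $\chi(G)\leq \lceil \frac32(t-1)\rceil$.
   Context: All graphs are finite and simple; $\alpha(G)$ is the independence number and $\chi(G)$ the chromatic number. A graph $G$ has $K_t$ as an odd minor if there exist vertex-disjoint trees $T_1,\dots,T_t\subseteq G$ and functions $\chi_i:V(T_i)\to\{\text{black},\text{white}\}$ such that (i) for every $i$, $\chi_i$ is a proper $2$-coloring of $T_i$, and (ii) for all $i\neq j$ there are vertices $x_i\in V(T_i)$, $x_j\in V(T_j)$ with $\{x_i,x_j\}\in E(G)$ and $\chi_i(x_i)=\chi_j(x_j)$. *)

theory Defs
  imports Complex_Main
begin

definition simple_graph :: "'a set \<Rightarrow> 'a set set \<Rightarrow> bool" where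
  "simple_graph V E \<longleftrightarrow> finite V \<and>
     (\<forall>e\<in>E. \<exists>u v. u \<noteq> v \<and> e = {u, v} \<and> u \<in> V \<and> v \<in> V)"

definition independent_set :: "'a set \<Rightarrow> 'a set set \<Rightarrow> 'a set \<Rightarrow> bool" where
  "independent_set V E S \<longleftrightarrow> S \<subseteq> V \<and> (\<forall>u\<in>S. \<forall>v\<in>S. {u, v} \<notin> E)"

definition independence_number :: "'a set \<Rightarrow> 'a set set \<Rightarrow> nat" where
  "independence_number V E = Max (card ` {S. independent_set V E S})"

definition proper_colouring :: "'a set \<Rightarrow> 'a set set \<Rightarrow> nat \<Rightarrow> ('a \<Rightarrow> nat) \<Rightarrow> bool" where
  "proper_colouring V E k c \<longleftrightarrow> (\<forall>v\<in>V. c v < k) \<and>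
     (\<forall>u\<in>V. \<forall>v\<in>V. {u, v} \<in> E \<longrightarrow> c u \<noteq> c v)"

definition chromatic_number :: "'a set \<Rightarrow> 'a set set \<Rightarrow> nat" where
  "chromatic_number V E = (LEAST k. \<exists>c. proper_colouring V E k c)"

definition connected_graph :: "'a set \<Rightarrow> 'a set set \<Rightarrow> bool" where
  "connected_graph VT ET \<longleftrightarrow> VT \<noteq> {} \<and>
     (\<forall>u\<in>VT. \<forall>v\<in>VT. (\<lambda>x y. {x, y} \<in> ET)\<^sup>*\<^sup>* u v)"

definition is_cycle :: "'a set set \<Rightarrow> 'a list \<Rightarrow> bool" where
  "is_cycle ET cs \<longleftrightarrow> length cs \<ge> 3 \<and> distinct cs \<and>
     (\<forall>i < length cs. {cs ! i, cs ! ((i + 1) mod length cs)} \<in> ET)"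

definition acyclic_graph :: "'a set set \<Rightarrow> bool" where
  "acyclic_graph ET \<longleftrightarrow> \<not> (\<exists>cs. is_cycle ET cs)"

definition is_tree :: "'a set \<Rightarrow> 'a set set \<Rightarrow> bool" where
  "is_tree VT ET \<longleftrightarrow> simple_graph VT ET \<and> connected_graph VT ET \<and> acyclic_graph ET"

text \<open>G = (V,E) has K_t as an odd minor: vertex-disjoint subtrees T_i = (VT i, ET i), i < t,
  with proper 2-colourings col i (True/False = black/white), such that any two distinct
  trees are joined by an edge of G whose ends have the same colour.\<close>
definition has_odd_clique_minor :: "'a set \<Rightarrow> 'a set set \<Rightarrow> nat \<Rightarrow> bool" where
  "has_odd_clique_minor V E t \<longleftrightarrow>
     (\<exists>(VT :: nat \<Rightarrow> 'a set) (ET :: nat \<Rightarrow> 'a set set) (col :: nat \<Rightarrow> 'a \<Rightarrow> bool).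
        (\<forall>i<t. is_tree (VT i) (ET i) \<and> VT i \<subseteq> V \<and> ET i \<subseteq> E \<and>
               (\<forall>x y. {x, y} \<in> ET i \<longrightarrow> col i x \<noteq> col i y)) \<and>
        (\<forall>i<t. \<forall>j<t. i \<noteq> j \<longrightarrow> VT i \<inter> VT j = {}) \<and>
        (\<forall>i<t. \<forall>j<t. i \<noteq> j \<longrightarrow>
           (\<exists>x\<in>VT i. \<exists>y\<in>VT j. {x, y} \<in> E \<and> col i x = col j y)))"

end

theory Submission
  imports Defs
begin

(* A greedy argument colours any graph with k colours while collecting a clique Q with
   2k <= |V| + |Q|: a non-adjacent pair receives a fresh colour, and a vertex adjacent to all
   remaining ones receives a fresh colour and joins Q.  It remains to find an odd K_m minor with
   3m >= |V| + |Q|.  Its branch trees are single vertices forming a clique and induced paths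
   a - c - b ("seagulls") whose ends a, b get the same colour; since alpha <= 2 the ends of a
   seagull dominate the graph, so any two branch trees are joined by an edge with equally
   coloured ends.  Seagulls are taken from V - Q as long as possible; once V - Q contains none,
   V is the disjoint union of two cliques, and the largest of these two and Q supplies enough
   singletons. *)

lemma disjoint_nth_of_distinct_concat:
  "distinct (concat L) \<Longrightarrow> i < length L \<Longrightarrow> j < length L \<Longrightarrow> i \<noteq> j
   \<Longrightarrow> set (L ! i) \<inter> set (L ! j) = {}"
  by (induction L arbitrary: i j) (fastforce simp: nth_Cons split: nat.splits)+

(* A cycle passes through c only once, so the edge two steps after c misses c. *)
lemma acyclic_graph_star:
  assumes "\<forall>e\<in>ET. c \<in> e"
  shows "acyclic_graph ET"
  unfolding acyclic_graph_def
proof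
  assume "\<exists>cs. is_cycle ET cs"
  then obtain cs where len: "length cs \<ge> 3" and dist: "distinct cs"
    and edge: "\<And>i. i < length cs \<Longrightarrow> {cs ! i, cs ! ((i + 1) mod length cs)} \<in> ET"
    unfolding is_cycle_def by blast
  let ?n = "length cs"
  have on_edge: "\<exists>k \<in> {i, (i + 1) mod ?n}. cs ! k = c" if "i < ?n" for i
    using assms edge[OF that] by auto
  have "0 < ?n"
    using len by linarith
  then have mod_less: "i mod ?n < ?n" for i
    by simp
  obtain p where "p \<in> {0, (0 + 1) mod ?n}" "cs ! p = c"
    using on_edge[OF \<open>0 < ?n\<close>] by blast
  then have p: "p < ?n" "cs ! p = c"
    using len by auto
  have index_c: "k = p" if "k < ?n" "cs ! k = c" for k
    using dist that p by (metis nth_eq_iff_index_eq)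
  have "(p + 1) mod ?n \<noteq> p"
    using len p(1) by (cases "p + 1 < ?n") (simp_all add: mod_if)
  moreover have "(p + 2) mod ?n \<noteq> p"
    using len p(1) by (cases "p + 2 < ?n") (auto simp: mod_if)
  moreover have "((p + 1) mod ?n + 1) mod ?n = (p + 2) mod ?n"
    by (simp add: mod_Suc_eq)
  moreover obtain k where "k \<in> {(p + 1) mod ?n, ((p + 1) mod ?n + 1) mod ?n}" "cs ! k = c"
    using on_edge[OF mod_less] by blast
  ultimately show False
    using index_c mod_less by fastforce
qed

lemma is_tree_singleton: "is_tree {v} {}"
proof -
  have "acyclic_graph {}"
    by (rule acyclic_graph_star) simp
  then show ?thesis
    unfolding is_tree_def simple_graph_def connected_graph_def by simp
qed

lemma is_tree_path3:
  assumes "a \<noteq> b" "a \<noteq> c" "b \<noteq> c"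
  shows "is_tree {a, c, b} {{a, c}, {c, b}}"
proof -
  let ?R = "\<lambda>x y. {x, y} \<in> {{a, c}, {c, b}}"
  have "?R\<^sup>*\<^sup>* x c" "?R\<^sup>*\<^sup>* c x" if "x \<in> {a, c, b}" for x
    using that by (auto simp: insert_commute)
  then have "connected_graph {a, c, b} {{a, c}, {c, b}}"
    unfolding connected_graph_def by (blast intro: rtranclp_trans)
  moreover have "acyclic_graph {{a, c}, {c, b}}"
    by (rule acyclic_graph_star[of _ c]) simp
  ultimately show ?thesis
    using assms unfolding is_tree_def simple_graph_def by auto
qed

lemma has_odd_clique_minor_mono:
  assumes "has_odd_clique_minor V E t" "s \<le> t"
  shows "has_odd_clique_minor V E s"
proof -
  from assms(1) obtain VT ET and col :: "nat \<Rightarrow> 'a \<Rightarrow> bool" where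
    "\<forall>i<t. is_tree (VT i) (ET i) \<and> VT i \<subseteq> V \<and> ET i \<subseteq> E \<and>
       (\<forall>x y. {x, y} \<in> ET i \<longrightarrow> col i x \<noteq> col i y)"
    "\<forall>i<t. \<forall>j<t. i \<noteq> j \<longrightarrow> VT i \<inter> VT j = {}"
    "\<forall>i<t. \<forall>j<t. i \<noteq> j \<longrightarrow> (\<exists>x\<in>VT i. \<exists>y\<in>VT j. {x, y} \<in> E \<and> col i x = col j y)"
    unfolding has_odd_clique_minor_def by (elim exE conjE) assumption
  then show ?thesis
    unfolding has_odd_clique_minor_def using assms(2)
    by (intro exI[of _ VT] exI[of _ ET] exI[of _ col] conjI allI impI)
      (simp_all add: order.strict_trans2)
qed

definition clique :: "'a set \<Rightarrow> 'a set set \<Rightarrow> 'a set \<Rightarrow> bool" where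
  "clique V E S \<longleftrightarrow> S \<subseteq> V \<and> (\<forall>u\<in>S. \<forall>v\<in>S. u \<noteq> v \<longrightarrow> {u, v} \<in> E)"

lemma clique_Un:
  assumes "clique W E A" "clique W E B" "\<forall>a\<in>A. \<forall>b\<in>B. {a, b} \<in> E"
  shows "clique W E (A \<union> B)"
  using assms unfolding clique_def by (auto, metis insert_commute)

lemma proper_colouring_new_class:
  assumes "proper_colouring (W - S) E k c" "independent_set W E S"
  shows "proper_colouring W E (Suc k) (\<lambda>x. if x \<in> S then k else c x)"
  using assms unfolding proper_colouring_def independent_set_def
  by (auto simp: less_Suc_eq)

definition colouring_clique_bound :: "'a set \<Rightarrow> 'a set set \<Rightarrow> bool" where
  "colouring_clique_bound W E \<longleftrightarrow>
     (\<exists>k c Q. proper_colouring W E k c \<and> clique W E Q \<and> 2 * k \<le> card W + card Q)"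

lemma colouring_clique_bound_non_edge:
  assumes "colouring_clique_bound (W - {u, v}) E" "finite W" "u \<in> W" "v \<in> W" "u \<noteq> v"
    and "{u, v} \<notin> E" "{u} \<notin> E" "{v} \<notin> E"
  shows "colouring_clique_bound W E"
proof -
  obtain k c Q where IH: "proper_colouring (W - {u, v}) E k c" "clique (W - {u, v}) E Q"
    "2 * k \<le> card (W - {u, v}) + card Q"
    using assms(1) unfolding colouring_clique_bound_def by blast
  have "independent_set W E {u, v}"
    using assms(3-8) unfolding independent_set_def by (auto simp: insert_commute)
  then have "proper_colouring W E (Suc k) (\<lambda>x. if x \<in> {u, v} then k else c x)"
    by (rule proper_colouring_new_class[OF IH(1)])
  moreover have "clique W E Q"
    using IH(2) unfolding clique_def by blast
  moreover have "card (W - {u, v}) + 2 = card W"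
    using assms(2-5) card_mono[OF assms(2), of "{u, v}"] by (simp add: card_Diff_subset)
  ultimately show ?thesis
    using IH(3) unfolding colouring_clique_bound_def by fastforce
qed

lemma colouring_clique_bound_universal:
  assumes "colouring_clique_bound (W - {v}) E" "finite W" "v \<in> W"
    and "\<forall>u\<in>W. u \<noteq> v \<longrightarrow> {u, v} \<in> E" "{v} \<notin> E"
  shows "colouring_clique_bound W E"
proof -
  obtain k c Q where IH: "proper_colouring (W - {v}) E k c" "clique (W - {v}) E Q"
    "2 * k \<le> card (W - {v}) + card Q"
    using assms(1) unfolding colouring_clique_bound_def by blast
  have "independent_set W E {v}"
    using assms(3,5) unfolding independent_set_def by auto
  then have "proper_colouring W E (Suc k) (\<lambda>x. if x \<in> {v} then k else c x)"
    by (rule proper_colouring_new_class[OF IH(1)])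
  moreover have "clique W E (insert v Q)"
    using IH(2) assms(3,4) unfolding clique_def by (auto simp: insert_commute)
  moreover have "finite Q" "v \<notin> Q"
    using IH(2) assms(2) unfolding clique_def by (auto intro: finite_subset)
  moreover have "card (W - {v}) + 1 = card W"
    using card_Suc_Diff1[OF assms(2,3)] by simp
  ultimately show ?thesis
    using IH(3) unfolding colouring_clique_bound_def by fastforce
qed

lemma colouring_clique_bound:
  assumes "simple_graph V E" "W \<subseteq> V"
  shows "colouring_clique_bound W E"
  using assms(2)
proof (induction "card W" arbitrary: W rule: less_induct)
  case less
  have "finite W"
    using less.prems assms(1) finite_subset unfolding simple_graph_def by blast
  have no_loop: "{v} \<notin> E" for v
    using assms(1) unfolding simple_graph_def by (metis doubleton_eq_iff insert_absorb2)
  show ?case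
  proof (cases "W = {}")
    case True
    then show ?thesis
      unfolding colouring_clique_bound_def proper_colouring_def clique_def by auto
  next
    case False
    then obtain v where "v \<in> W"
      by blast
    have smaller: "colouring_clique_bound (W - S) E" if "v \<in> S" for S
      using less.prems \<open>v \<in> W\<close> \<open>finite W\<close> that
      by (intro less.hyps psubset_card_mono) auto
    show ?thesis
    proof (cases "\<exists>u\<in>W. u \<noteq> v \<and> {u, v} \<notin> E")
      case True
      then obtain u where "u \<in> W" "u \<noteq> v" "{u, v} \<notin> E"
        by blast
      then show ?thesis
        using \<open>v \<in> W\<close> \<open>finite W\<close> no_loop
        by (intro colouring_clique_bound_non_edge[of W u v] smaller) auto
    next
      case False
      then show ?thesis
        using \<open>v \<in> W\<close> \<open>finite W\<close> no_loop
        by (intro colouring_clique_bound_universal[of W v] smaller) auto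
    qed
  qed
qed

locale alpha_le_2_graph =
  fixes V :: "'a set" and E :: "'a set set"
  assumes simple: "simple_graph V E"
    and alpha_le_2: "independence_number V E \<le> 2"
begin

lemma finite_vertices: "finite V"
  using simple unfolding simple_graph_def by blast

lemma no_loop: "{v} \<notin> E"
  using simple unfolding simple_graph_def by (metis doubleton_eq_iff insert_absorb2)

lemma triple_has_edge:
  assumes "x \<in> V" "y \<in> V" "z \<in> V" "x \<noteq> y" "y \<noteq> z" "x \<noteq> z"
  shows "{x, y} \<in> E \<or> {y, z} \<in> E \<or> {x, z} \<in> E"
proof (rule ccontr)
  assume "\<not> ?thesis"
  then have "independent_set V E {x, y, z}"
    using assms no_loop unfolding independent_set_def by (auto simp: insert_commute)
  moreover have "finite {S. independent_set V E S}"
    using finite_vertices by (auto simp: independent_set_def)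
  ultimately have "card {x, y, z} \<le> independence_number V E"
    unfolding independence_number_def by (intro Max_ge) auto
  then show False
    using assms alpha_le_2 by simp
qed

definition seagull :: "'a \<Rightarrow> 'a \<Rightarrow> 'a \<Rightarrow> bool" where
  "seagull a c b \<longleftrightarrow> a \<in> V \<and> b \<in> V \<and> c \<in> V \<and> a \<noteq> b \<and> a \<noteq> c \<and> b \<noteq> c \<and>
     {a, c} \<in> E \<and> {c, b} \<in> E \<and> {a, b} \<notin> E"

lemma seagull_ends_dominate:
  "seagull a c b \<Longrightarrow> y \<in> V \<Longrightarrow> y \<noteq> a \<Longrightarrow> y \<noteq> b \<Longrightarrow> {a, y} \<in> E \<or> {b, y} \<in> E"
  using triple_has_edge[of a b y] unfolding seagull_def by (auto simp: insert_commute)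

definition branch :: "'a list \<Rightarrow> bool" where
  "branch T \<longleftrightarrow> (\<exists>v\<in>V. T = [v]) \<or> (\<exists>a c b. T = [a, c, b] \<and> seagull a c b)"

definition branch_edges :: "'a list \<Rightarrow> 'a set set" where
  "branch_edges T = (if length T = 3 then {{T ! 0, T ! 1}, {T ! 1, T ! 2}} else {})"

definition branch_colour :: "'a list \<Rightarrow> 'a \<Rightarrow> bool" where
  "branch_colour T v \<longleftrightarrow> length T \<noteq> 3 \<or> v \<noteq> T ! 1"

definition seagull_clique_family :: "'a list list \<Rightarrow> bool" where
  "seagull_clique_family L \<longleftrightarrow>
     (\<forall>T\<in>set L. branch T) \<and> distinct (concat L) \<and> clique V E {v. [v] \<in> set L}"

lemma branch_is_tree:
  assumes "branch T"
  shows "is_tree (set T) (branch_edges T) \<and> set T \<subseteq> V \<and> branch_edges T \<subseteq> E \<and>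
    (\<forall>x y. {x, y} \<in> branch_edges T \<longrightarrow> branch_colour T x \<noteq> branch_colour T y)"
  using assms unfolding branch_def
proof
  assume "\<exists>v\<in>V. T = [v]"
  then show ?thesis
    unfolding branch_edges_def using is_tree_singleton by auto
next
  assume "\<exists>a c b. T = [a, c, b] \<and> seagull a c b"
  then obtain a c b where "T = [a, c, b]" "seagull a c b"
    by blast
  then show ?thesis
    using is_tree_path3[of a b c] unfolding branch_edges_def branch_colour_def seagull_def
    by (auto simp: doubleton_eq_iff)
qed

lemma seagull_branch_link:
  assumes "seagull a c b" "branch T" "set T \<inter> {a, c, b} = {}"
  shows "\<exists>x\<in>{a, c, b}. \<exists>y\<in>set T. {x, y} \<in> E \<and> branch_colour [a, c, b] x \<and> branch_colour T y"
proof -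
  obtain y where y: "y \<in> set T" "y \<in> V" "branch_colour T y"
    using assms(2) unfolding branch_def branch_colour_def seagull_def by force
  have "branch_colour [a, c, b] a" "branch_colour [a, c, b] b"
    using assms(1) unfolding branch_colour_def seagull_def by auto
  moreover have "y \<noteq> a" "y \<noteq> b"
    using assms(3) y(1) by auto
  ultimately show ?thesis
    using seagull_ends_dominate[OF assms(1) y(2)] y by blast
qed

lemma branches_linked:
  assumes "branch T" "branch T'" "set T \<inter> set T' = {}"
    and singletons_adjacent: "\<And>v w. T = [v] \<Longrightarrow> T' = [w] \<Longrightarrow> {v, w} \<in> E"
  shows "\<exists>x\<in>set T. \<exists>y\<in>set T'. {x, y} \<in> E \<and> branch_colour T x = branch_colour T' y"
proof -
  consider (seagull) a c b where "T = [a, c, b]" "seagull a c b"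
    | (seagull') a c b where "T' = [a, c, b]" "seagull a c b"
    | (singletons) v w where "T = [v]" "T' = [w]"
    using assms(1,2) unfolding branch_def by blast
  then show ?thesis
  proof cases
    case seagull
    then show ?thesis
      using seagull_branch_link[of a c b T'] assms(2,3) by auto
  next
    case seagull'
    then obtain x y where "x \<in> set T'" "y \<in> set T" "{x, y} \<in> E"
        "branch_colour T' x" "branch_colour T y"
      using seagull_branch_link[of a c b T] assms(1,3) by auto
    moreover from \<open>{x, y} \<in> E\<close> have "{y, x} \<in> E"
      by (simp add: insert_commute)
    ultimately show ?thesis
      by blast
  next
    case singletons
    then show ?thesis
      using singletons_adjacent unfolding branch_colour_def by simp
  qed
qed

lemma has_odd_clique_minor_of_family:
  assumes family: "seagull_clique_family L"
  shows "has_odd_clique_minor V E (length L)"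
proof -
  have branch: "branch (L ! i)" if "i < length L" for i
    using family that unfolding seagull_clique_family_def by simp
  have disjoint: "set (L ! i) \<inter> set (L ! j) = {}"
    if "i < length L" "j < length L" "i \<noteq> j" for i j
    using family disjoint_nth_of_distinct_concat[OF _ that]
    unfolding seagull_clique_family_def by blast
  have "{v, w} \<in> E" if "i < length L" "j < length L" "i \<noteq> j" "L ! i = [v]" "L ! j = [w]"
    for i j v w
  proof -
    have "[v] \<in> set L" "[w] \<in> set L" "v \<noteq> w"
      using that nth_mem disjoint[OF that(1-3)] by force+
    then show ?thesis
      using family unfolding seagull_clique_family_def clique_def by blast
  qed
  then have "\<exists>x\<in>set (L ! i). \<exists>y\<in>set (L ! j). {x, y} \<in> E \<and>
      branch_colour (L ! i) x = branch_colour (L ! j) y"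
    if "i < length L" "j < length L" "i \<noteq> j" for i j
    using that branch disjoint by (intro branches_linked) auto
  then show ?thesis
    unfolding has_odd_clique_minor_def using branch_is_tree[OF branch] disjoint
    by (intro exI[of _ "\<lambda>i. set (L ! i)"] exI[of _ "\<lambda>i. branch_edges (L ! i)"]
      exI[of _ "\<lambda>i. branch_colour (L ! i)"]) auto
qed

definition seagull_free :: "'a set \<Rightarrow> bool" where
  "seagull_free R \<longleftrightarrow> (\<nexists>a c b. a \<in> R \<and> c \<in> R \<and> b \<in> R \<and> seagull a c b)"

lemma seagull_free_adjacent:
  assumes "seagull_free R" "R \<subseteq> V" "u \<in> R" "w \<in> R" "y \<in> R" "u \<noteq> w"
    and "{u, y} \<in> E" "{y, w} \<in> E"
  shows "{u, w} \<in> E"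
proof (rule ccontr)
  assume "{u, w} \<notin> E"
  moreover have "u \<noteq> y" "w \<noteq> y"
    using assms(7,8) no_loop by auto
  ultimately have "seagull u y w"
    using assms(2-8) unfolding seagull_def by auto
  then show False
    using assms(1,3-5) unfolding seagull_free_def by blast
qed

lemma seagull_free_split:
  assumes "seagull_free R" "R \<subseteq> V" "x \<in> R"
  defines "N \<equiv> {z \<in> R. z = x \<or> {x, z} \<in> E}"
  shows "clique R E N" "clique R E (R - N)"
    and "\<And>q z w. q \<in> V - R \<Longrightarrow> z \<in> N \<Longrightarrow> {q, z} \<notin> E \<Longrightarrow> w \<in> R - N \<Longrightarrow> {q, w} \<in> E"
proof -
  show "clique R E N"
    unfolding clique_def
  proof (intro conjI ballI impI)
    fix z z' assume "z \<in> N" "z' \<in> N" "z \<noteq> z'"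
    then show "{z, z'} \<in> E"
      using seagull_free_adjacent[OF assms(1,2), of z z' x] assms(3) unfolding N_def
      by (auto simp: insert_commute)
  qed (auto simp: N_def)
  show "clique R E (R - N)"
    unfolding clique_def
  proof (intro conjI ballI impI)
    fix z z' assume "z \<in> R - N" "z' \<in> R - N" "z \<noteq> z'"
    then show "{z, z'} \<in> E"
      using triple_has_edge[of x z z'] assms(2,3) unfolding N_def by auto
  qed auto
  fix q z w
  assume q: "q \<in> V - R" and z: "z \<in> N" "{q, z} \<notin> E" and w: "w \<in> R - N"
  have "{z, w} \<notin> E"
  proof
    assume "{z, w} \<in> E"
    then have "{w, x} \<in> E"
      using seagull_free_adjacent[OF assms(1,2), of w x z] z w assms(3) unfolding N_def
      by (auto simp: insert_commute)
    then show False
      using w unfolding N_def by (auto simp: insert_commute)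
  qed
  moreover have "q \<noteq> z" "q \<noteq> w" "z \<noteq> w"
    using q z w unfolding N_def by auto
  ultimately show "{q, w} \<in> E"
    using triple_has_edge[of q z w] q z w assms(2) unfolding N_def by auto
qed

lemma two_clique_cover:
  assumes "W \<subseteq> V" "clique W E Q" "seagull_free (W - Q)"
  shows "\<exists>C D. W = C \<union> D \<and> C \<inter> D = {} \<and> clique W E C \<and> clique W E D"
proof (cases "W - Q = {}")
  case True
  then show ?thesis
    using assms(2) by (intro exI[of _ Q] exI[of _ "{}"]) (auto simp: clique_def)
next
  case False
  then obtain x where x: "x \<in> W - Q"
    by blast
  define N where "N = {z \<in> W - Q. z = x \<or> {x, z} \<in> E}"
  define Q1 where "Q1 = {q \<in> Q. \<forall>z \<in> N. {q, z} \<in> E}"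
  have "W - Q \<subseteq> V"
    using assms(1) by blast
  note split = seagull_free_split[OF assms(3) this x, folded N_def]
  have cross: "{q, w} \<in> E" if q: "q \<in> Q - Q1" and w: "w \<in> W - Q - N" for q w
  proof -
    obtain z where "z \<in> N" "{q, z} \<notin> E"
      using q unfolding Q1_def by blast
    then show ?thesis
      using split(3)[of q z w] q w assms(1,2) unfolding clique_def by auto
  qed
  have "clique W E (Q1 \<union> N)"
    using split(1) assms(2) by (intro clique_Un) (auto simp: clique_def Q1_def)
  moreover have "clique W E ((Q - Q1) \<union> (W - Q - N))"
    using split(2) assms(2) cross by (intro clique_Un) (auto simp: clique_def)
  moreover have "W = (Q1 \<union> N) \<union> ((Q - Q1) \<union> (W - Q - N))"
    "(Q1 \<union> N) \<inter> ((Q - Q1) \<union> (W - Q - N)) = {}"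
    using assms(2) unfolding clique_def Q1_def N_def by auto
  ultimately show ?thesis
    by blast
qed

lemma seagull_clique_family_of_clique:
  assumes "clique V E K" "finite K"
  shows "\<exists>L. seagull_clique_family L \<and> set (concat L) = K \<and> length L = card K"
proof -
  obtain xs where xs: "set xs = K" "distinct xs"
    using finite_distinct_list[OF assms(2)] by blast
  let ?L = "map (\<lambda>v. [v]) xs"
  have "concat ?L = xs" "{v. [v] \<in> set ?L} = K"
    using xs(1) by (induction xs) auto
  moreover have "length ?L = card K"
    using xs distinct_card by fastforce
  ultimately show ?thesis
    using assms(1) xs unfolding seagull_clique_family_def branch_def clique_def
    by (intro exI[of _ ?L]) auto
qed

lemma seagull_clique_family_Cons:
  assumes "seagull_clique_family L" "seagull a c b" "{a, c, b} \<inter> set (concat L) = {}"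
  shows "seagull_clique_family ([a, c, b] # L)"
proof -
  have "{v. [v] \<in> set ([a, c, b] # L)} = {v. [v] \<in> set L}"
    by auto
  moreover have "distinct [a, c, b]"
    using assms(2) unfolding seagull_def by auto
  ultimately show ?thesis
    using assms unfolding seagull_clique_family_def branch_def by auto
qed

lemma seagull_clique_family_of_seagull_free:
  assumes "W \<subseteq> V" "clique W E Q" "seagull_free (W - Q)"
  shows "\<exists>L. seagull_clique_family L \<and> set (concat L) \<subseteq> W \<and> card W + card Q \<le> 3 * length L"
proof -
  obtain C D where CD: "W = C \<union> D" "C \<inter> D = {}" "clique W E C" "clique W E D"
    using two_clique_cover[OF assms] by blast
  have "finite W"
    using assms(1) finite_vertices finite_subset by blast
  then have "card W = card C + card D"
    using CD(1,2) by (simp add: card_Un_disjoint)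
  then have "card W + card Q \<le> 3 * card C \<or> card W + card Q \<le> 3 * card D \<or>
      card W + card Q \<le> 3 * card Q"
    by linarith
  then obtain K where "K \<in> {C, D, Q}" "card W + card Q \<le> 3 * card K"
    by blast
  moreover have "clique V E K" "K \<subseteq> W"
    using calculation(1) CD(3,4) assms(1,2) unfolding clique_def by auto
  ultimately show ?thesis
    using seagull_clique_family_of_clique[of K] \<open>finite W\<close> finite_subset by metis
qed

lemma seagull_clique_family_exists:
  assumes "W \<subseteq> V" "clique W E Q"
  shows "\<exists>L. seagull_clique_family L \<and> set (concat L) \<subseteq> W \<and> card W + card Q \<le> 3 * length L"
  using assms
proof (induction "card W" arbitrary: W rule: less_induct)
  case less
  show ?case
  proof (cases "seagull_free (W - Q)")
    case True
    then show ?thesis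
      using seagull_clique_family_of_seagull_free less.prems by blast
  next
    case False
    then obtain a c b where abc: "a \<in> W - Q" "c \<in> W - Q" "b \<in> W - Q" "seagull a c b"
      unfolding seagull_free_def by blast
    let ?W = "W - {a, c, b}"
    have "finite W"
      using less.prems(1) finite_vertices finite_subset by blast
    moreover have "card {a, c, b} = 3"
      using abc(4) unfolding seagull_def by auto
    ultimately have card: "card ?W + 3 = card W"
      using abc card_mono[of W "{a, c, b}"] by (simp add: card_Diff_subset)
    moreover have "clique ?W E Q"
      using less.prems(2) abc unfolding clique_def by auto
    ultimately obtain L where L: "seagull_clique_family L" "set (concat L) \<subseteq> ?W"
        "card ?W + card Q \<le> 3 * length L"
      using less.hyps[of ?W] less.prems(1) by fastforce
    then have "seagull_clique_family ([a, c, b] # L)"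
      using abc(4) by (intro seagull_clique_family_Cons) auto
    then show ?thesis
      using L(2,3) abc card by (intro exI[of _ "[a, c, b] # L"]) auto
  qed
qed

end

theorem proposition1p5:
  fixes V :: "'a set" and E :: "'a set set" and t :: nat
  assumes "t \<ge> 1"
    and "simple_graph V E"
    and "independence_number V E \<le> 2"
    and "\<not> has_odd_clique_minor V E t"
  shows "real (chromatic_number V E) \<le> real_of_int \<lceil>(3 / 2 :: real) * (real t - 1)\<rceil>"
proof -
  interpret alpha_le_2_graph V E
    using assms(2,3) by unfold_locales
  obtain k c Q where colouring: "proper_colouring V E k c" "clique V E Q"
    "2 * k \<le> card V + card Q"
    using colouring_clique_bound[OF assms(2) order_refl]
    unfolding colouring_clique_bound_def by blast
  obtain L where L: "seagull_clique_family L" "card V + card Q \<le> 3 * length L"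
    using seagull_clique_family_exists[OF order_refl colouring(2)] by blast
  have "length L < t"
    using has_odd_clique_minor_of_family[OF L(1)] has_odd_clique_minor_mono assms(4)
    by (meson not_less)
  then have "2 * k \<le> 3 * (t - 1)"
    using colouring(3) L(2) by linarith
  moreover have "chromatic_number V E \<le> k"
    unfolding chromatic_number_def using colouring(1) by (intro Least_le) blast
  ultimately have "real (chromatic_number V E) \<le> (3 / 2) * (real t - 1)"
    using assms(1) by (simp add: of_nat_diff)
  also have "\<dots> \<le> real_of_int \<lceil>(3 / 2 :: real) * (real t - 1)\<rceil>"
    by (rule le_of_int_ceiling)
  finally show ?thesis .
qed

end
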